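(* Let $p\ge2$ be an integer, $\mathcal{F}$ the infinite rooted tree with root $\delta$ in which every vertex has exactly $p$ children, and let $a,b$ be integral weight functions on $\mathcal{F}$ with weights $\omega_a,\omega_b$ respectively. Then $$\langle a,b\rangle\ \ge\ \sum_{i=0}^{\infty}p^i\,\widehat\gamma_i(\omega_a)\,\widehat\gamma_i(\omega_b).$$
   Context: An integral weight function with weight $\omega$ (a nonnegative integer) is a map $a:V(\mathcal{F})\to\mathbb{Z}_{\ge0}$ such that (1) for every infinite path $T$ starting at the root, $\sum_{v\in T}a(v)\ge\omega$; (2) for every vertex $v$, $a(v)\ge\sum_{u\in N_v}a(u)$, where $N_v$ is the set of children of $v$. The scalar product is $\langle a,b\rangle=\sum_{v}a(v)b(v)\in[0,\infty]$. An integral resolution of $\omega$ is a sequence $(\gamma_i)_{i\ge0}$ of nonnegative integers with $\gamma_i\ge p\gamma_{i+1}$ and $\sum_i\gamma_i=\omega$; $(\widehat\gamma_i(\omega))_{i\ge0}$ denotes the lexicographically smallest one. *)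

theory Defs
  imports "HOL-Analysis.Analysis"
begin

text \<open>The p-ary rooted tree F: vertices are finite lists over {0..<p};
  the root delta is the empty list, the children of v are the lists x # v with x < p.\<close>

definition tree_vertices :: "nat \<Rightarrow> nat list set" where
  "tree_vertices p = {v. \<forall>x\<in>set v. x < p}"

definition tree_children :: "nat \<Rightarrow> nat list \<Rightarrow> nat list set" where
  "tree_children p v = {x # v | x. x < p}"

definition root_path :: "nat \<Rightarrow> (nat \<Rightarrow> nat list) \<Rightarrow> bool" where
  "root_path p T \<longleftrightarrow> T 0 = [] \<and> (\<forall>n. T (Suc n) \<in> tree_children p (T n))"

definition integral_weight_function :: "nat \<Rightarrow> nat \<Rightarrow> (nat list \<Rightarrow> nat) \<Rightarrow> bool" where
  "integral_weight_function p \<omega> a \<longleftrightarrow>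
     (\<forall>T. root_path p T \<longrightarrow> (\<Sum>n. (of_nat (a (T n)) :: ennreal)) \<ge> of_nat \<omega>) \<and>
     (\<forall>v\<in>tree_vertices p. a v \<ge> (\<Sum>u\<in>tree_children p v. a u))"

definition scalar_prod :: "nat \<Rightarrow> (nat list \<Rightarrow> nat) \<Rightarrow> (nat list \<Rightarrow> nat) \<Rightarrow> ennreal" where
  "scalar_prod p a b = (\<Sum>\<^sub>\<infinity>v\<in>tree_vertices p. (of_nat (a v * b v) :: ennreal))"

definition integral_resolution :: "nat \<Rightarrow> nat \<Rightarrow> (nat \<Rightarrow> nat) \<Rightarrow> bool" where
  "integral_resolution p \<omega> \<gamma> \<longleftrightarrow>
     (\<forall>i. \<gamma> i \<ge> p * \<gamma> (Suc i)) \<and> (\<Sum>i. (of_nat (\<gamma> i) :: ennreal)) = of_nat \<omega>"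

definition lex_less :: "(nat \<Rightarrow> nat) \<Rightarrow> (nat \<Rightarrow> nat) \<Rightarrow> bool" where
  "lex_less \<gamma> \<delta> \<longleftrightarrow> (\<exists>k. (\<forall>i<k. \<gamma> i = \<delta> i) \<and> \<gamma> k < \<delta> k)"

definition min_resolution :: "nat \<Rightarrow> nat \<Rightarrow> nat \<Rightarrow> nat" where
  "min_resolution p \<omega> = (THE \<gamma>. integral_resolution p \<omega> \<gamma> \<and>
      (\<forall>\<delta>. integral_resolution p \<omega> \<delta> \<longrightarrow> \<gamma> = \<delta> \<or> lex_less \<gamma> \<delta>))"

end

theory Submission
  imports Defs
begin

text \<open>The lexicographically least resolution of \<omega> is greedy: its first term is the least \<open>c\<close>
  with \<open>\<omega> \<le> c + \<lfloor>c/p\<rfloor> + \<lfloor>c/p\<^sup>2\<rfloor> + \<dots>\<close>, and its remaining terms form the least resolution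
  of \<open>\<omega> - c\<close>. Hence \<open>h(A,B) = \<Sum>\<^sub>i p\<^sup>i \<gamma>\<^sub>i(A) \<gamma>\<^sub>i(B)\<close> satisfies
  \<open>h(A,B) = \<gamma>\<^sub>0(A) \<gamma>\<^sub>0(B) + p h(A - \<gamma>\<^sub>0(A), B - \<gamma>\<^sub>0(B))\<close>, and a discrete convexity argument shows
  \<open>h(A,B) \<le> c d + p h(A - c, B - d)\<close> whenever \<open>c \<ge> \<gamma>\<^sub>0(A)\<close> and \<open>d \<ge> \<gamma>\<^sub>0(B)\<close>.
  For a weight function \<open>a\<close> of weight \<open>A\<close>, the root value \<open>c = a(\<delta>)\<close> is at least \<open>\<gamma>\<^sub>0(A)\<close>,
  because always stepping to a child of least value gives a path whose values shrink by a
  factor \<open>p\<close> at each step; and each of the \<open>p\<close> subtrees carries a weight function of weight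
  \<open>A - c\<close>. Induction on \<open>A\<close> then bounds \<open>h(A,B)\<close> by the scalar product, one subtree at a time.\<close>

section \<open>Sequences decreasing by a factor p\<close>

text \<open>\<open>max_chain_sum p c = c + \<lfloor>c/p\<rfloor> + \<lfloor>c/p\<^sup>2\<rfloor> + \<dots>\<close>, the largest sum of a sequence of naturals
  starting at \<open>c\<close> in which each term is at most \<open>1/p\<close> of its predecessor.\<close>

function max_chain_sum :: "nat \<Rightarrow> nat \<Rightarrow> nat" where
  "max_chain_sum p c = (if c = 0 \<or> p < 2 then 0 else c + max_chain_sum p (c div p))"
  by auto
termination by (relation "Wellfounded.measure snd") auto

declare max_chain_sum.simps [simp del]

lemma max_chain_sum_0 [simp]: "max_chain_sum p 0 = 0"
  by (simp add: max_chain_sum.simps)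

lemma max_chain_sum_eq: "p \<ge> 2 \<Longrightarrow> max_chain_sum p c = c + max_chain_sum p (c div p)"
  by (cases "c = 0") (simp_all add: max_chain_sum.simps)

lemma max_chain_sum_mono:
  assumes "p \<ge> 2" "c \<le> c'"
  shows "max_chain_sum p c \<le> max_chain_sum p c'"
  using assms(2)
proof (induction c' arbitrary: c rule: less_induct)
  case (less c')
  show ?case
  proof (cases "c = 0")
    case False
    with less.prems assms(1) have "c' div p < c'" by simp
    moreover have "c div p \<le> c' div p" using less.prems by (rule div_le_mono)
    ultimately have "max_chain_sum p (c div p) \<le> max_chain_sum p (c' div p)"
      using less.IH by blast
    then show ?thesis
      using less.prems max_chain_sum_eq[OF assms(1), of c] max_chain_sum_eq[OF assms(1), of c']
      by simp
  qed simp
qed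

lemma le_max_chain_sum: "p \<ge> 2 \<Longrightarrow> c \<le> max_chain_sum p c"
  using max_chain_sum_eq[of p c] by simp

lemma max_chain_sum_less_Suc:
  assumes "p \<ge> 2"
  shows "max_chain_sum p c < max_chain_sum p (Suc c)"
proof -
  have "max_chain_sum p (c div p) \<le> max_chain_sum p (Suc c div p)"
    by (intro max_chain_sum_mono[OF assms] div_le_mono) simp
  then show ?thesis
    using max_chain_sum_eq[OF assms, of c] max_chain_sum_eq[OF assms, of "Suc c"] by simp
qed

lemma sum_chain_le_max_chain_sum:
  assumes "p \<ge> 2" "\<And>n. p * \<delta> (Suc n) \<le> \<delta> n"
  shows "(\<Sum>i<n. \<delta> (k + i)) \<le> max_chain_sum p (\<delta> k)"
proof (induction n arbitrary: k)
  case (Suc n)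
  have "\<delta> (Suc k) = p * \<delta> (Suc k) div p" using assms(1) by simp
  also have "\<dots> \<le> \<delta> k div p" using assms(2) by (rule div_le_mono)
  finally have step: "max_chain_sum p (\<delta> (Suc k)) \<le> max_chain_sum p (\<delta> k div p)"
    by (rule max_chain_sum_mono[OF assms(1)])
  have "(\<Sum>i<Suc n. \<delta> (k + i)) = \<delta> k + (\<Sum>i<n. \<delta> (Suc k + i))"
    by (subst sum.lessThan_Suc_shift) simp
  also have "\<dots> \<le> \<delta> k + max_chain_sum p (\<delta> (Suc k))" using Suc.IH[of "Suc k"] by simp
  also have "\<dots> \<le> max_chain_sum p (\<delta> k)"
    using step max_chain_sum_eq[OF assms(1), of "\<delta> k"] by simp
  finally show ?case .
qed simp

lemma suminf_chain_le_max_chain_sum: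
  assumes "p \<ge> 2" "\<And>n. p * \<delta> (Suc n) \<le> \<delta> n"
  shows "(\<Sum>n. of_nat (\<delta> n) :: ennreal) \<le> of_nat (max_chain_sum p (\<delta> 0))"
proof (rule suminf_le_const[OF summableI])
  fix n
  show "(\<Sum>i<n. of_nat (\<delta> i) :: ennreal) \<le> of_nat (max_chain_sum p (\<delta> 0))"
    using sum_chain_le_max_chain_sum[where \<delta>=\<delta> and n=n and k=0, OF assms]
    by (simp flip: of_nat_sum)
qed

lemma suminf_ennreal_head: "(\<Sum>n. f n :: ennreal) = f 0 + (\<Sum>n. f (Suc n))"
  using suminf_offset[of f 1, OF summableI] by (simp add: add.commute)

section \<open>The least integral resolution\<close>

definition least_head :: "nat \<Rightarrow> nat \<Rightarrow> nat" where
  "least_head p w = (LEAST c. w \<le> max_chain_sum p c)"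

lemma le_max_chain_sum_least_head: "p \<ge> 2 \<Longrightarrow> w \<le> max_chain_sum p (least_head p w)"
  unfolding least_head_def by (rule LeastI[of _ w]) (rule le_max_chain_sum)

lemma least_head_le: "w \<le> max_chain_sum p c \<Longrightarrow> least_head p w \<le> c"
  unfolding least_head_def by (rule Least_le)

lemma least_head_le_self: "p \<ge> 2 \<Longrightarrow> least_head p w \<le> w"
  by (intro least_head_le le_max_chain_sum)

lemma least_head_0 [simp]: "least_head p 0 = 0"
  using least_head_le[of 0 p 0] by simp

lemma least_head_pos: "p \<ge> 2 \<Longrightarrow> w > 0 \<Longrightarrow> least_head p w > 0"
  using le_max_chain_sum_least_head[of p w] by (cases "least_head p w") auto

lemma least_head_mono: "p \<ge> 2 \<Longrightarrow> v \<le> w \<Longrightarrow> least_head p v \<le> least_head p w"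
  using le_max_chain_sum_least_head[of p w] by (intro least_head_le) simp

lemma least_head_Suc_le: "p \<ge> 2 \<Longrightarrow> least_head p (Suc w) \<le> Suc (least_head p w)"
  using le_max_chain_sum_least_head[of p w] max_chain_sum_less_Suc[of p "least_head p w"]
  by (intro least_head_le) simp

lemma mult_least_head_diff_le:
  assumes "p \<ge> 2" "least_head p w \<le> d"
  shows "p * least_head p (w - d) \<le> d"
proof -
  have "w \<le> max_chain_sum p d"
    using le_max_chain_sum_least_head[OF assms(1), of w] max_chain_sum_mono[OF assms] by simp
  then have "least_head p (w - d) \<le> d div p"
    using max_chain_sum_eq[OF assms(1), of d] by (intro least_head_le) simp
  then have "p * least_head p (w - d) \<le> p * (d div p)" by simp
  also have "\<dots> \<le> d" by simp
  finally show ?thesis .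
qed

primrec greedy_resolution :: "nat \<Rightarrow> nat \<Rightarrow> nat \<Rightarrow> nat" where
  "greedy_resolution p w 0 = least_head p w"
| "greedy_resolution p w (Suc i) = greedy_resolution p (w - least_head p w) i"

lemma greedy_resolution_0 [simp]: "greedy_resolution p 0 i = 0"
  by (induction i) simp_all

lemma greedy_resolution_Suc_le:
  "p \<ge> 2 \<Longrightarrow> p * greedy_resolution p w (Suc i) \<le> greedy_resolution p w i"
proof (induction i arbitrary: w)
  case 0
  then show ?case using mult_least_head_diff_le[of p w "least_head p w"] by simp
next
  case (Suc i)
  then show ?case using Suc.IH[of "w - least_head p w"] by (simp only: greedy_resolution.simps(2))
qed

lemma suminf_greedy_resolution:
  assumes "p \<ge> 2"
  shows "(\<Sum>i. of_nat (greedy_resolution p w i) :: ennreal) = of_nat w"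
proof (induction w rule: less_induct)
  case (less w)
  show ?case
  proof (cases "w = 0")
    case False
    then have "w - least_head p w < w" using least_head_pos[OF assms] by simp
    then have "(\<Sum>i. of_nat (greedy_resolution p w i) :: ennreal)
        = of_nat (least_head p w) + of_nat (w - least_head p w)"
      using less.IH by (subst suminf_ennreal_head) simp
    also have "\<dots> = of_nat w"
      using least_head_le_self[OF assms, of w] by (simp flip: of_nat_add)
    finally show ?thesis .
  qed simp
qed

lemma integral_resolution_greedy: "p \<ge> 2 \<Longrightarrow> integral_resolution p w (greedy_resolution p w)"
  unfolding integral_resolution_def
  using greedy_resolution_Suc_le suminf_greedy_resolution by auto

lemma least_head_le_resolution:
  assumes "p \<ge> 2" "integral_resolution p w \<delta>"
  shows "least_head p w \<le> \<delta> 0"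
proof -
  have "(of_nat w :: ennreal) \<le> of_nat (max_chain_sum p (\<delta> 0))"
    using suminf_chain_le_max_chain_sum[OF assms(1), of \<delta>] assms(2)
    unfolding integral_resolution_def by auto
  then show ?thesis by (intro least_head_le) simp
qed

lemma integral_resolution_tail:
  assumes "integral_resolution p w \<delta>"
  shows "integral_resolution p (w - \<delta> 0) (\<lambda>i. \<delta> (Suc i))"
proof -
  have w: "of_nat w = (of_nat (\<delta> 0) :: ennreal) + (\<Sum>i. of_nat (\<delta> (Suc i)))"
    using assms suminf_ennreal_head[of "\<lambda>i. of_nat (\<delta> i) :: ennreal"]
    unfolding integral_resolution_def by simp
  then have "(of_nat (\<delta> 0) :: ennreal) \<le> of_nat w" by (metis le_iff_add)
  then have "(of_nat w :: ennreal) = of_nat (\<delta> 0) + of_nat (w - \<delta> 0)"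
    by (simp flip: of_nat_add)
  with w have "(\<Sum>i. of_nat (\<delta> (Suc i)) :: ennreal) = of_nat (w - \<delta> 0)"
    by (simp add: ennreal_add_left_cancel)
  then show ?thesis using assms unfolding integral_resolution_def by auto
qed

lemma lex_less_asym: "lex_less x y \<Longrightarrow> \<not> lex_less y x"
  unfolding lex_less_def by (metis less_asym linorder_neqE_nat)

lemma greedy_resolution_prefix_or_lex_less:
  assumes "p \<ge> 2" "integral_resolution p w \<delta>"
  shows "(\<forall>i<k. \<delta> i = greedy_resolution p w i) \<or> lex_less (greedy_resolution p w) \<delta>"
  using assms(2)
proof (induction k arbitrary: w \<delta>)
  case (Suc k)
  show ?case
  proof (cases "least_head p w < \<delta> 0")
    case True
    then have "lex_less (greedy_resolution p w) \<delta>"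
      unfolding lex_less_def by (intro exI[of _ 0]) simp
    then show ?thesis ..
  next
    case False
    with least_head_le_resolution[OF assms(1) Suc.prems] have head: "\<delta> 0 = least_head p w"
      by simp
    from Suc.IH[OF integral_resolution_tail[OF Suc.prems, unfolded head]] show ?thesis
    proof
      assume "\<forall>i<k. \<delta> (Suc i) = greedy_resolution p (w - least_head p w) i"
      then have "\<forall>i<Suc k. \<delta> i = greedy_resolution p w i"
        using head by (auto simp: less_Suc_eq_0_disj)
      then show ?thesis ..
    next
      assume "lex_less (greedy_resolution p (w - least_head p w)) (\<lambda>i. \<delta> (Suc i))"
      then obtain j where
        "\<forall>i<j. greedy_resolution p w (Suc i) = \<delta> (Suc i)"
        "greedy_resolution p w (Suc j) < \<delta> (Suc j)"
        unfolding lex_less_def by auto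
      then have "lex_less (greedy_resolution p w) \<delta>"
        unfolding lex_less_def using head
        by (intro exI[of _ "Suc j"]) (auto simp: less_Suc_eq_0_disj)
      then show ?thesis ..
    qed
  qed
qed simp

lemma min_resolution_eq_greedy:
  assumes "p \<ge> 2"
  shows "min_resolution p w = greedy_resolution p w"
proof -
  have least: "greedy_resolution p w = \<delta> \<or> lex_less (greedy_resolution p w) \<delta>"
    if "integral_resolution p w \<delta>" for \<delta>
  proof (cases "lex_less (greedy_resolution p w) \<delta>")
    case False
    then have "\<delta> i = greedy_resolution p w i" for i
      using greedy_resolution_prefix_or_lex_less[OF assms that, of "Suc i"] by simp
    then show ?thesis by auto
  qed simp
  show ?thesis
    unfolding min_resolution_def
  proof (rule the_equality)
    fix \<gamma>
    assume "integral_resolution p w \<gamma> \<and>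
      (\<forall>\<delta>. integral_resolution p w \<delta> \<longrightarrow> \<gamma> = \<delta> \<or> lex_less \<gamma> \<delta>)"
    then show "\<gamma> = greedy_resolution p w"
      using least integral_resolution_greedy[OF assms] lex_less_asym by blast
  qed (use least integral_resolution_greedy[OF assms] in blast)
qed

section \<open>Pairing of least resolutions\<close>

text \<open>\<open>resolution_pairing p A B = \<Sum>\<^sub>i p\<^sup>i \<gamma>\<^sub>i(A) \<gamma>\<^sub>i(B)\<close> for the least resolutions \<open>\<gamma>\<close>,
  defined through the recursion it satisfies so that it is a natural number.\<close>

function resolution_pairing :: "nat \<Rightarrow> nat \<Rightarrow> nat \<Rightarrow> nat" where
  "resolution_pairing p A B =
    (if p < 2 \<or> A = 0 \<or> B = 0 then 0
     else least_head p A * least_head p B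
       + p * resolution_pairing p (A - least_head p A) (B - least_head p B))"
  by auto
termination
  by (relation "Wellfounded.measure (\<lambda>(p, A, B). A)") (auto simp: least_head_pos)

declare resolution_pairing.simps [simp del]

lemma resolution_pairing_0 [simp]: "resolution_pairing p 0 B = 0" "resolution_pairing p A 0 = 0"
  by (simp_all add: resolution_pairing.simps)

lemma resolution_pairing_eq:
  "p \<ge> 2 \<Longrightarrow> resolution_pairing p A B = least_head p A * least_head p B
     + p * resolution_pairing p (A - least_head p A) (B - least_head p B)"
  by (subst resolution_pairing.simps) auto

lemma suminf_greedy_resolution_products:
  assumes "p \<ge> 2"
  shows "(\<Sum>i. of_nat (p ^ i * greedy_resolution p A i * greedy_resolution p B i) :: ennreal)
    = of_nat (resolution_pairing p A B)"
proof (induction A arbitrary: B rule: less_induct)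
  case (less A)
  show ?case
  proof (cases "A = 0")
    case False
    let ?A' = "A - least_head p A" and ?B' = "B - least_head p B"
    have "?A' < A" using False least_head_pos[OF assms] by simp
    note IH = less.IH[OF this, of ?B']
    have "(\<Sum>i. of_nat (p ^ i * greedy_resolution p A i * greedy_resolution p B i) :: ennreal)
      = of_nat (least_head p A * least_head p B)
        + (\<Sum>i. of_nat p * of_nat (p ^ i * greedy_resolution p ?A' i * greedy_resolution p ?B' i))"
      by (subst suminf_ennreal_head) (simp add: mult.assoc)
    also have "\<dots> = of_nat (least_head p A * least_head p B) + of_nat p * of_nat (resolution_pairing p ?A' ?B')"
      using IH by (simp only: ennreal_suminf_cmult)
    also have "\<dots> = of_nat (resolution_pairing p A B)"
      using resolution_pairing_eq[OF assms, of A B] by simp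
    finally show ?thesis .
  qed simp
qed

lemma resolution_pairing_commute:
  assumes "p \<ge> 2"
  shows "resolution_pairing p A B = resolution_pairing p B A"
proof (induction A arbitrary: B rule: less_induct)
  case (less A)
  show ?case
  proof (cases "A = 0")
    case False
    then have "A - least_head p A < A" using least_head_pos[OF assms] by simp
    then show ?thesis
      using less.IH[of "A - least_head p A" "B - least_head p B"]
        resolution_pairing_eq[OF assms, of A B] resolution_pairing_eq[OF assms, of B A]
      by (simp only: mult.commute)
  qed simp
qed

lemma resolution_pairing_le_pred:
  assumes "p \<ge> 2"
  shows "resolution_pairing p A B \<le> resolution_pairing p (A - 1) B + least_head p B"
proof (induction A arbitrary: B rule: less_induct)
  case (less A)
  define u where "u = least_head p A"
  define B' where "B' = B - least_head p B"
  have hA: "resolution_pairing p A B = u * least_head p B + p * resolution_pairing p (A - u) B'"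
    unfolding u_def B'_def by (rule resolution_pairing_eq[OF assms])
  have u: "least_head p (A - 1) \<le> u" "u \<le> Suc (least_head p (A - 1))"
    using least_head_mono[OF assms, of "A - 1" A] least_head_Suc_le[OF assms, of "A - 1"]
    unfolding u_def by (cases A; simp)+
  show ?case
  proof (cases "least_head p (A - 1) = u")
    case True
    have hA': "resolution_pairing p (A - 1) B
        = u * least_head p B + p * resolution_pairing p (A - u - 1) B'"
      using resolution_pairing_eq[OF assms, of "A - 1" B] True unfolding B'_def
      by (simp add: diff_commute)
    show ?thesis
    proof (cases "A - u = 0")
      case False
      then have "resolution_pairing p (A - u) B' \<le> resolution_pairing p (A - u - 1) B' + least_head p B'"
        using less.IH[of "A - u" B'] least_head_pos[OF assms, of A] unfolding u_def by simp
      then have "p * resolution_pairing p (A - u) B'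
          \<le> p * resolution_pairing p (A - u - 1) B' + p * least_head p B'"
        by (metis add_mult_distrib2 mult_le_mono2)
      moreover have "p * least_head p B' \<le> least_head p B"
        unfolding B'_def by (rule mult_least_head_diff_le[OF assms]) simp
      ultimately show ?thesis using hA hA' by simp
    qed (use hA hA' in simp)
  next
    txt \<open>Here the head drops by one, and the remainders \<open>A - u\<close> and \<open>(A - 1) - (u - 1)\<close> agree.\<close>
    case False
    with u have "least_head p (A - 1) = u - 1" "u \<ge> 1" by auto
    then have "resolution_pairing p (A - 1) B
        = (u - 1) * least_head p B + p * resolution_pairing p (A - u) B'"
      using resolution_pairing_eq[OF assms, of "A - 1" B] unfolding B'_def by simp
    with hA \<open>u \<ge> 1\<close> show ?thesis by (cases u) simp_all
  qed
qed

lemma mono_resolution_pairing_split: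
  assumes "p \<ge> 2" "least_head p B \<le> d"
  shows "mono (\<lambda>c. c * d + p * resolution_pairing p (A - c) (B - d))"
  unfolding mono_iff_le_Suc
proof
  fix c
  show "c * d + p * resolution_pairing p (A - c) (B - d)
      \<le> Suc c * d + p * resolution_pairing p (A - Suc c) (B - d)"
  proof -
    have "resolution_pairing p (A - c) (B - d)
        \<le> resolution_pairing p (A - Suc c) (B - d) + least_head p (B - d)"
      using resolution_pairing_le_pred[OF assms(1), of "A - c" "B - d"] by simp
    then have "p * resolution_pairing p (A - c) (B - d)
        \<le> p * resolution_pairing p (A - Suc c) (B - d) + p * least_head p (B - d)"
      by (metis add_mult_distrib2 mult_le_mono2)
    also have "p * least_head p (B - d) \<le> d" by (rule mult_least_head_diff_le[OF assms])
    finally show ?thesis by simp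
  qed
qed

lemma resolution_pairing_le_split:
  assumes "p \<ge> 2" "least_head p A \<le> c" "least_head p B \<le> d"
  shows "resolution_pairing p A B \<le> c * d + p * resolution_pairing p (A - c) (B - d)"
proof -
  let ?a = "least_head p A" and ?b = "least_head p B"
  have "resolution_pairing p A B = ?b * ?a + p * resolution_pairing p (B - ?b) (A - ?a)"
    using resolution_pairing_eq[OF assms(1), of A B] resolution_pairing_commute[OF assms(1)]
    by (simp add: mult.commute)
  also have "\<dots> \<le> d * ?a + p * resolution_pairing p (B - d) (A - ?a)"
    using monoD[OF mono_resolution_pairing_split[OF assms(1) order_refl] assms(3)] .
  also have "\<dots> = ?a * d + p * resolution_pairing p (A - ?a) (B - d)"
    using resolution_pairing_commute[OF assms(1)] by (simp add: mult.commute)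
  also have "\<dots> \<le> c * d + p * resolution_pairing p (A - c) (B - d)"
    using monoD[OF mono_resolution_pairing_split[OF assms(1,3)] assms(2)] .
  finally show ?thesis .
qed

section \<open>Weight functions on the p-ary tree\<close>

lemma sum_tree_children: "(\<Sum>u\<in>tree_children p v. f u) = (\<Sum>x<p. f (x # v))"
proof -
  have "tree_children p v = (\<lambda>x. x # v) ` {..<p}" unfolding tree_children_def by auto
  then show ?thesis by (simp add: sum.reindex inj_on_def)
qed

text \<open>Vertices are stored leaf-first, so the subtree below the child \<open>[x]\<close> of the root consists
  of the lists \<open>v @ [x]\<close>.\<close>

lemma tree_vertices_eq_subtrees:
  "tree_vertices p = insert [] (\<Union>x<p. (\<lambda>v. v @ [x]) ` tree_vertices p)"
proof (intro equalityI subsetI)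
  fix v assume v: "v \<in> tree_vertices p"
  show "v \<in> insert [] (\<Union>x<p. (\<lambda>v. v @ [x]) ` tree_vertices p)"
  proof (cases v rule: rev_cases)
    case (snoc ys y)
    then have "y < p" "ys \<in> tree_vertices p" using v unfolding tree_vertices_def by auto
    then show ?thesis using snoc by blast
  qed simp
qed (auto simp: tree_vertices_def)

lemma scalar_prod_eq_subtrees:
  "scalar_prod p a b
    = of_nat (a [] * b []) + (\<Sum>x<p. scalar_prod p (\<lambda>v. a (v @ [x])) (\<lambda>v. b (v @ [x])))"
proof -
  define f where "f v = (of_nat (a v * b v) :: ennreal)" for v
  define sub where "sub x = (\<lambda>v. v @ [x]) ` tree_vertices p" for x
  have summable: "f summable_on V" for V by (rule nonneg_summable_on_complete) simp
  have subtree: "infsum f (sub x) = scalar_prod p (\<lambda>v. a (v @ [x])) (\<lambda>v. b (v @ [x]))" for x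
    unfolding sub_def scalar_prod_def f_def
    by (subst infsum_reindex) (simp_all add: inj_on_def comp_def)
  have "scalar_prod p a b = infsum f (insert [] (\<Union>x<p. sub x))"
    unfolding scalar_prod_def f_def sub_def by (subst tree_vertices_eq_subtrees) (rule refl)
  also have "\<dots> = f [] + (\<Sum>x<p. infsum f (sub x))"
    by (subst infsum_insert[OF summable], use sub_def in force)
       (subst sum_infsum, auto simp: summable sub_def)
  finally show ?thesis unfolding f_def subtree by simp
qed

lemma ennreal_of_nat_diff_le:
  "(of_nat w :: ennreal) \<le> of_nat c + X \<Longrightarrow> of_nat (w - c) \<le> X"
proof (cases "c \<le> w")
  case True
  assume "(of_nat w :: ennreal) \<le> of_nat c + X"
  moreover have "(of_nat w :: ennreal) = of_nat c + of_nat (w - c)"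
    using True by (simp flip: of_nat_add)
  ultimately show ?thesis by (simp add: ennreal_add_left_cancel_le)
qed simp

lemma integral_weight_function_subtree:
  assumes "integral_weight_function p w a" "x < p"
  shows "integral_weight_function p (w - a []) (\<lambda>v. a (v @ [x]))"
  unfolding integral_weight_function_def
proof (intro conjI allI impI ballI)
  fix T assume T: "root_path p T"
  define T' where "T' n = (case n of 0 \<Rightarrow> [] | Suc n \<Rightarrow> T n @ [x])" for n
  have "root_path p T'"
    using T assms(2) unfolding root_path_def tree_children_def T'_def
    by (auto split: nat.split)
  then have "of_nat w \<le> (\<Sum>n. (of_nat (a (T' n)) :: ennreal))"
    using assms(1) unfolding integral_weight_function_def by blast
  also have "\<dots> = of_nat (a []) + (\<Sum>n. of_nat (a (T n @ [x])))"
    by (subst suminf_ennreal_head) (simp add: T'_def)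
  finally show "of_nat (w - a []) \<le> (\<Sum>n. (of_nat (a (T n @ [x])) :: ennreal))"
    by (rule ennreal_of_nat_diff_le)
next
  fix v assume "v \<in> tree_vertices p"
  then have "v @ [x] \<in> tree_vertices p" using assms(2) unfolding tree_vertices_def by auto
  then show "(\<Sum>u\<in>tree_children p v. a (u @ [x])) \<le> a (v @ [x])"
    using assms(1) unfolding integral_weight_function_def by (simp add: sum_tree_children)
qed

lemma exists_child_mult_le:
  assumes "p \<ge> 2" "integral_weight_function p w a" "v \<in> tree_vertices p"
  shows "\<exists>x<p. p * a (x # v) \<le> a v"
proof (rule ccontr)
  assume "\<not> ?thesis"
  then have "(\<Sum>x<p. a v) < (\<Sum>x<p. p * a (x # v))"
    using assms(1) by (intro sum_strict_mono) (auto simp: lessThan_empty_iff)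
  then have "p * a v < p * (\<Sum>x<p. a (x # v))" by (simp add: sum_distrib_left)
  moreover have "(\<Sum>x<p. a (x # v)) \<le> a v"
    using assms(2,3) unfolding integral_weight_function_def by (simp add: sum_tree_children)
  ultimately show False by (meson mult_le_mono2 not_less)
qed

lemma least_head_le_root:
  assumes "p \<ge> 2" "integral_weight_function p w a"
  shows "least_head p w \<le> a []"
proof -
  define next_child where "next_child v = (SOME x. x < p \<and> p * a (x # v) \<le> a v)" for v
  define T where "T = rec_nat [] (\<lambda>_ v. next_child v # v)"
  have T0: "T 0 = []" and T_Suc: "T (Suc n) = next_child (T n) # T n" for n
    unfolding T_def by simp_all
  have T: "T n \<in> tree_vertices p \<and> next_child (T n) < p \<and> p * a (T (Suc n)) \<le> a (T n)" for n
  proof (induction n)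
    case 0
    have "[] \<in> tree_vertices p" unfolding tree_vertices_def by simp
    from someI_ex[OF exists_child_mult_le[OF assms this]] show ?case
      unfolding next_child_def T_Suc T0 using \<open>[] \<in> tree_vertices p\<close> by simp
  next
    case (Suc n)
    then have v: "T (Suc n) \<in> tree_vertices p" unfolding T_Suc tree_vertices_def by simp
    from someI_ex[OF exists_child_mult_le[OF assms v]] show ?case
      using v unfolding next_child_def T_Suc[of "Suc n"] by simp
  qed
  have "root_path p T" unfolding root_path_def tree_children_def using T0 T_Suc T by auto
  then have "of_nat w \<le> (\<Sum>n. (of_nat (a (T n)) :: ennreal))"
    using assms(2) unfolding integral_weight_function_def by blast
  also have "\<dots> \<le> of_nat (max_chain_sum p (a (T 0)))"
    by (rule suminf_chain_le_max_chain_sum[OF assms(1)]) (use T in blast)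
  finally show ?thesis using T0 by (intro least_head_le) simp
qed

lemma resolution_pairing_le_scalar_prod:
  assumes "p \<ge> 2" "integral_weight_function p A a" "integral_weight_function p B b"
  shows "of_nat (resolution_pairing p A B) \<le> scalar_prod p a b"
  using assms(2,3)
proof (induction A arbitrary: B a b rule: less_induct)
  case (less A)
  show ?case
  proof (cases "A = 0")
    case False
    let ?c = "a []" and ?d = "b []"
    have hc: "least_head p A \<le> ?c" and hd: "least_head p B \<le> ?d"
      using least_head_le_root[OF assms(1)] less.prems by blast+
    moreover have "0 < least_head p A" using least_head_pos[OF assms(1)] False by simp
    ultimately have "A - ?c < A" using False by simp
    have subtree: "of_nat (resolution_pairing p (A - ?c) (B - ?d))
        \<le> scalar_prod p (\<lambda>v. a (v @ [x])) (\<lambda>v. b (v @ [x]))" if "x < p" for x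
      by (rule less.IH[OF \<open>A - ?c < A\<close> integral_weight_function_subtree[OF less.prems(1) that]
            integral_weight_function_subtree[OF less.prems(2) that]])
    have "(of_nat (resolution_pairing p A B) :: ennreal)
        \<le> of_nat (?c * ?d + p * resolution_pairing p (A - ?c) (B - ?d))"
      using resolution_pairing_le_split[OF assms(1) hc hd] by (simp only: of_nat_le_iff)
    also have "\<dots> = of_nat (?c * ?d) + (\<Sum>x<p. of_nat (resolution_pairing p (A - ?c) (B - ?d)))"
      by simp
    also have "\<dots> \<le> of_nat (?c * ?d) + (\<Sum>x<p. scalar_prod p (\<lambda>v. a (v @ [x])) (\<lambda>v. b (v @ [x])))"
      using subtree by (intro add_left_mono sum_mono) simp
    also have "\<dots> = scalar_prod p a b" by (rule scalar_prod_eq_subtrees[symmetric])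
    finally show ?thesis .
  qed simp
qed

theorem mainTheorem5:
  fixes p \<omega>a \<omega>b :: nat and a b :: "nat list \<Rightarrow> nat"
  assumes "p \<ge> 2"
    and "integral_weight_function p \<omega>a a"
    and "integral_weight_function p \<omega>b b"
  shows "scalar_prod p a b \<ge>
    (\<Sum>i. of_nat (p ^ i * min_resolution p \<omega>a i * min_resolution p \<omega>b i) :: ennreal)"
  unfolding min_resolution_eq_greedy[OF assms(1)] suminf_greedy_resolution_products[OF assms(1)]
  by (rule resolution_pairing_le_scalar_prod[OF assms])

end
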